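(* Let $d$ be a prime (possibly $d=2$), $n\in\mathbb{N}$, $A$ a multiplicative abelian group with an embedding $\zeta:\mathbb{Z}_d\to A$ such that every element $a\in\zeta(\mathbb{Z}_d)$ has a square root in $A$ (an element $b\in A$ with $b^2=a$), and let $W_1,W_2\in M_n(\mathbb{Z}_d)$ be such that $\Omega_i=W_i-W_i^T$ has full rank over $\mathbb{Z}_d$ for $i=1,2$. Then the polar commutator groups $\mathcal{G}_d^n(A,\zeta,W_1)$ and $\mathcal{G}_d^n(A,\zeta,W_2)$ are isomorphic.
   Context: An embedding $\zeta:\mathbb{Z}_d\to A$ is an injective group homomorphism. Let $F\subseteq A$ be a fixed set of representatives of $A/\zeta(\mathbb{Z}_d)$ with $1\in F$, and $r:A\to F$, $u:A\to\mathbb{Z}_d$ the maps with $a=r(a)\zeta(u(a))$. For $W\in M_n(\mathbb{Z}_d)$, $\mathcal{G}_d^n(A,\zeta,W)$ is the set $F\times\mathbb{Z}_d\times\mathbb{Z}_d^n$ with multiplication $(a,p,x)\cdot(b,q,y)=(r(ab),\,u(ab)+p+q+x^TWy,\,x+y)$. *)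

theory Defs
  imports "HOL-Algebra.Elementary_Groups" "HOL-Computational_Algebra.Primes"
begin

text \<open>Z_d is modelled as the integers {0..<d} (integer_mod_group d); vectors in Z_d^n as
  extensional functions {0..<n} to {0..<d}; n x n matrices as functions nat to nat to int
  (only indices below n matter).\<close>

definition zvecs :: "nat \<Rightarrow> nat \<Rightarrow> (nat \<Rightarrow> int) set" where
  "zvecs d n = {0..<n} \<rightarrow>\<^sub>E {0..<int d}"

definition zmats :: "nat \<Rightarrow> nat \<Rightarrow> (nat \<Rightarrow> nat \<Rightarrow> int) set" where
  "zmats d n = {W. \<forall>i<n. \<forall>j<n. W i j \<in> {0..<int d}}"

definition omega_mat :: "nat \<Rightarrow> (nat \<Rightarrow> nat \<Rightarrow> int) \<Rightarrow> nat \<Rightarrow> nat \<Rightarrow> int" where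
  "omega_mat d W = (\<lambda>i j. (W i j - W j i) mod int d)"

definition full_rank_mod :: "nat \<Rightarrow> nat \<Rightarrow> (nat \<Rightarrow> nat \<Rightarrow> int) \<Rightarrow> bool" where
  "full_rank_mod d n M \<longleftrightarrow>
     (\<forall>x \<in> zvecs d n. (\<forall>i<n. (\<Sum>j<n. M i j * x j) mod int d = 0) \<longrightarrow> (\<forall>j<n. x j = 0))"

definition bilin :: "nat \<Rightarrow> (nat \<Rightarrow> nat \<Rightarrow> int) \<Rightarrow> (nat \<Rightarrow> int) \<Rightarrow> (nat \<Rightarrow> int) \<Rightarrow> int" where
  "bilin n W x y = (\<Sum>i<n. \<Sum>j<n. x i * W i j * y j)"

definition is_transversal :: "('a, 'b) monoid_scheme \<Rightarrow> nat \<Rightarrow> (int \<Rightarrow> 'a) \<Rightarrow> 'a set \<Rightarrow> bool" where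
  "is_transversal A d \<zeta> F \<longleftrightarrow> F \<subseteq> carrier A \<and> \<one>\<^bsub>A\<^esub> \<in> F \<and>
     (\<forall>a \<in> carrier A. \<exists>!f. f \<in> F \<and> (\<exists>k \<in> {0..<int d}. a = f \<otimes>\<^bsub>A\<^esub> \<zeta> k))"

definition rep_r :: "('a, 'b) monoid_scheme \<Rightarrow> nat \<Rightarrow> (int \<Rightarrow> 'a) \<Rightarrow> 'a set \<Rightarrow> 'a \<Rightarrow> 'a" where
  "rep_r A d \<zeta> F a = (THE f. f \<in> F \<and> (\<exists>k \<in> {0..<int d}. a = f \<otimes>\<^bsub>A\<^esub> \<zeta> k))"

definition rep_u :: "('a, 'b) monoid_scheme \<Rightarrow> nat \<Rightarrow> (int \<Rightarrow> 'a) \<Rightarrow> 'a set \<Rightarrow> 'a \<Rightarrow> int" where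
  "rep_u A d \<zeta> F a = (THE k. k \<in> {0..<int d} \<and> a = rep_r A d \<zeta> F a \<otimes>\<^bsub>A\<^esub> \<zeta> k)"

definition polar_group ::
  "nat \<Rightarrow> nat \<Rightarrow> ('a, 'b) monoid_scheme \<Rightarrow> (int \<Rightarrow> 'a) \<Rightarrow> 'a set \<Rightarrow> (nat \<Rightarrow> nat \<Rightarrow> int)
   \<Rightarrow> ('a \<times> int \<times> (nat \<Rightarrow> int)) monoid" where
  "polar_group d n A \<zeta> F W =
    \<lparr> carrier = F \<times> {0..<int d} \<times> zvecs d n,
      monoid.mult = (\<lambda>(a, p, x) (b, q, y).
        (rep_r A d \<zeta> F (a \<otimes>\<^bsub>A\<^esub> b),
         (rep_u A d \<zeta> F (a \<otimes>\<^bsub>A\<^esub> b) + p + q + bilin n W x y) mod int d,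
         (\<lambda>i \<in> {0..<n}. (x i + y i) mod int d))),
      one = (\<one>\<^bsub>A\<^esub>, 0, (\<lambda>i \<in> {0..<n}. 0)) \<rparr>"

end

theory Submission
  imports Defs "HOL-Algebra.Multiplicative_Group"
begin

(* Omega = W - W^T is a nondegenerate alternating form over the field Z_d, so symplectic
   Gram-Schmidt yields a basis c_0, ..., c_(n-1) of Z_d^n (hence n is even) in which Omega is
   the standard symplectic matrix J = W_std - W_std^T. In these coordinates W becomes the Gram
   matrix M = (c_a^T W c_b), and M - W_std is congruent to a symmetric matrix S.
   Writing (a, p, x) as (a zeta(p), x) turns the group law into
   (alpha, x) (beta, y) = (alpha beta g^(x^T W y), x + y) with g = zeta(1). Choosing t with
   t^2 = g, the map phi(x) = t^(x^T S x) satisfies phi(x + y) = phi(x) phi(y) g^(x^T S y), so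
   (alpha, x) |-> (alpha phi(x), sum_a x_a c_a) is an isomorphism G(W_std) -> G(W). *)

lemma sum_mod_cong:
  fixes f g :: "'i \<Rightarrow> int"
  assumes "\<And>i. i \<in> I \<Longrightarrow> f i mod m = g i mod m"
  shows "sum f I mod m = sum g I mod m"
proof -
  have "sum f I mod m = (\<Sum>i\<in>I. f i mod m) mod m" by (simp add: mod_sum_eq)
  also have "\<dots> = (\<Sum>i\<in>I. g i mod m) mod m" using assms by (simp cong: sum.cong)
  also have "\<dots> = sum g I mod m" by (simp add: mod_sum_eq)
  finally show ?thesis .
qed

lemma mod_inverse_prime:
  fixes g :: int
  assumes "prime d" "g mod int d \<noteq> 0"
  shows "\<exists>h. (g * h) mod int d = 1"
proof -
  have "\<not> int d dvd g" using assms(2) by (simp add: dvd_eq_mod_eq_0)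
  then have "coprime (int d) g" using assms(1) by (simp add: prime_imp_coprime)
  then obtain u v where "u * g + v * int d = 1"
    using bezout_int[of g "int d"] by (auto simp: coprime_iff_gcd_eq_1 gcd.commute)
  then have "(g * u) mod int d = 1 mod int d" by (metis mod_mult_self3 mult.commute add.commute)
  then show ?thesis using assms(1) prime_gt_1_nat by auto
qed

lemma finite_zvecs: "finite (zvecs d n)"
  unfolding zvecs_def by (simp add: finite_PiE)

lemma card_zvecs: "card (zvecs d n) = d ^ n"
  unfolding zvecs_def by (simp add: card_PiE)

lemma zvecs_eqI: "x \<in> zvecs d n \<Longrightarrow> y \<in> zvecs d n \<Longrightarrow> (\<And>i. i < n \<Longrightarrow> x i = y i) \<Longrightarrow> x = y"
  unfolding zvecs_def by (rule PiE_ext) auto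

lemma zvecs_mod: "x \<in> zvecs d n \<Longrightarrow> i < n \<Longrightarrow> x i mod int d = x i"
  unfolding zvecs_def by (auto simp: PiE_iff)

definition zvec_add :: "nat \<Rightarrow> nat \<Rightarrow> (nat \<Rightarrow> int) \<Rightarrow> (nat \<Rightarrow> int) \<Rightarrow> nat \<Rightarrow> int" where
  "zvec_add d n x y = (\<lambda>i\<in>{0..<n}. (x i + y i) mod int d)"

lemma zvec_add_in_zvecs: "x \<in> zvecs d n \<Longrightarrow> zvec_add d n x y \<in> zvecs d n"
  unfolding zvec_add_def zvecs_def by (cases "d = 0") (auto simp: PiE_iff)

definition lincomb :: "nat \<Rightarrow> nat \<Rightarrow> nat \<Rightarrow> (nat \<Rightarrow> nat \<Rightarrow> int) \<Rightarrow> (nat \<Rightarrow> int) \<Rightarrow> nat \<Rightarrow> int" where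
  "lincomb d n N c x = (\<lambda>i\<in>{0..<n}. (\<Sum>a<N. x a * c a i) mod int d)"

lemma lincomb_in_zvecs: "d > 0 \<Longrightarrow> lincomb d n N c x \<in> zvecs d n"
  unfolding lincomb_def zvecs_def by auto

lemma lincomb_apply: "i < n \<Longrightarrow> lincomb d n N c x i = (\<Sum>a<N. x a * c a i) mod int d"
  unfolding lincomb_def by simp

lemma lincomb_add:
  "lincomb d n N c (zvec_add d N x y) = zvec_add d n (lincomb d n N c x) (lincomb d n N c y)"
proof
  fix i
  show "lincomb d n N c (zvec_add d N x y) i = zvec_add d n (lincomb d n N c x) (lincomb d n N c y) i"
  proof (cases "i < n")
    case True
    have "(\<Sum>a<N. zvec_add d N x y a * c a i) mod int d = (\<Sum>a<N. (x a + y a) * c a i) mod int d"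
      by (rule sum_mod_cong) (auto simp: zvec_add_def mod_mult_left_eq)
    also have "\<dots> = ((\<Sum>a<N. x a * c a i) mod int d + (\<Sum>a<N. y a * c a i) mod int d) mod int d"
      by (simp add: distrib_right sum.distrib mod_add_eq)
    finally show ?thesis using True unfolding lincomb_def zvec_add_def by simp
  qed (simp add: lincomb_def zvec_add_def)
qed

lemma bilin_sum_left:
  "bilin n W (\<lambda>i. \<Sum>a\<in>I. t a * c a i) y = (\<Sum>a\<in>I. t a * bilin n W (c a) y)"
  unfolding bilin_def
  by (simp add: sum_distrib_left sum_distrib_right mult.assoc sum.swap[of _ I])

lemma bilin_sum_right:
  "bilin n W x (\<lambda>i. \<Sum>a\<in>I. t a * c a i) = (\<Sum>a\<in>I. t a * bilin n W x (c a))"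
  unfolding bilin_def
  by (simp add: sum_distrib_left sum_distrib_right mult.assoc mult.left_commute sum.swap[of _ I])

lemma bilin_diff_left: "bilin n W (\<lambda>i. x i - y i) z = bilin n W x z - bilin n W y z"
  unfolding bilin_def by (simp add: algebra_simps sum_subtractf)

lemma bilin_diff_right: "bilin n W z (\<lambda>i. x i - y i) = bilin n W z x - bilin n W z y"
  unfolding bilin_def by (simp add: algebra_simps sum_subtractf)

lemma bilin_smult_left: "bilin n W (\<lambda>i. h * x i) y = h * bilin n W x y"
  unfolding bilin_def by (simp add: algebra_simps sum_distrib_left)

lemma bilin_smult_right: "bilin n W x (\<lambda>i. h * y i) = h * bilin n W x y"
  unfolding bilin_def by (simp add: algebra_simps sum_distrib_left)

lemma bilin_add_matrix: "bilin n S x y + bilin n T x y = bilin n (\<lambda>i j. S i j + T i j) x y"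
  unfolding bilin_def by (simp add: sum.distrib[symmetric] algebra_simps)

lemma bilin_sym:
  assumes "\<And>i j. S i j = S j i"
  shows "bilin n S x y = bilin n S y x"
  unfolding bilin_def by (subst sum.swap) (simp add: assms mult.commute mult.left_commute)

lemma bilin_mod_cong:
  assumes "\<And>i. i < n \<Longrightarrow> x i mod m = x' i mod m"
    and "\<And>i. i < n \<Longrightarrow> y i mod m = y' i mod m"
  shows "bilin n W x y mod m = bilin n W x' y' mod m"
  unfolding bilin_def
  by (intro sum_mod_cong) (use assms in \<open>auto intro: mod_mult_cong\<close>)

lemma bilin_mod_cong_matrix:
  assumes "\<And>i j. i < n \<Longrightarrow> j < n \<Longrightarrow> W i j mod m = W' i j mod m"
  shows "bilin n W x y mod m = bilin n W' x y mod m"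
  unfolding bilin_def
  by (intro sum_mod_cong) (use assms in \<open>auto intro: mod_mult_cong\<close>)

definition unit_vec :: "nat \<Rightarrow> nat \<Rightarrow> int" where
  "unit_vec i = (\<lambda>j. if j = i then 1 else 0)"

lemma bilin_unit_vec_left:
  assumes "i < n"
  shows "bilin n W (unit_vec i) y = (\<Sum>j<n. W i j * y j)"
proof -
  have "bilin n W (unit_vec i) y = (\<Sum>k<n. if k = i then (\<Sum>j<n. W i j * y j) else 0)"
    unfolding bilin_def unit_vec_def by (rule sum.cong) auto
  then show ?thesis using assms by simp
qed

lemma bilin_unit_vec_right:
  assumes "i < n"
  shows "bilin n W x (unit_vec i) = (\<Sum>j<n. x j * W j i)"
proof -
  have "bilin n W x (unit_vec i) = (\<Sum>j<n. \<Sum>k<n. if k = i then x j * W j i else 0)"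
    unfolding bilin_def unit_vec_def by (intro sum.cong) auto
  then show ?thesis using assms by simp
qed

lemma bilin_expand_square:
  fixes m :: int
  assumes "\<And>i. i < n \<Longrightarrow> z i = x i + y i - m * w i"
  shows "bilin n S z z = bilin n S x x + bilin n S y y + bilin n S x y + bilin n S y x
     - m * (bilin n S x w + bilin n S w x + bilin n S y w + bilin n S w y) + m * m * bilin n S w w"
proof -
  have "bilin n S z z = (\<Sum>i<n. \<Sum>j<n. (x i + y i - m * w i) * S i j * (x j + y j - m * w j))"
    unfolding bilin_def using assms by (intro sum.cong) auto
  also have "\<dots> = (\<Sum>i<n. \<Sum>j<n. x i * S i j * x j + y i * S i j * y j + x i * S i j * y j
     + y i * S i j * x j - m * (x i * S i j * w j + w i * S i j * x j + y i * S i j * w j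
     + w i * S i j * y j) + m * m * (w i * S i j * w j))"
    by (intro sum.cong) (auto simp: algebra_simps)
  also have "\<dots> = bilin n S x x + bilin n S y y + bilin n S x y + bilin n S y x
     - m * (bilin n S x w + bilin n S w x + bilin n S y w + bilin n S w y) + m * m * bilin n S w w"
    unfolding bilin_def by (simp add: sum.distrib sum_subtractf sum_distrib_left distrib_left)
  finally show ?thesis .
qed

lemma bilin_gram:
  "bilin n W (\<lambda>i. \<Sum>a<N. x a * c a i) (\<lambda>i. \<Sum>b<N. y b * c b i)
     = bilin N (\<lambda>a b. bilin n W (c a) (c b)) x y"
proof -
  have "bilin n W (\<lambda>i. \<Sum>a<N. x a * c a i) (\<lambda>i. \<Sum>b<N. y b * c b i)
      = (\<Sum>a<N. x a * (\<Sum>b<N. y b * bilin n W (c a) (c b)))"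
    by (simp add: bilin_sum_left bilin_sum_right)
  also have "\<dots> = bilin N (\<lambda>a b. bilin n W (c a) (c b)) x y"
    unfolding bilin_def[of N] by (simp add: sum_distrib_left mult.commute mult.left_commute)
  finally show ?thesis .
qed

lemma bilin_lincomb:
  "bilin n W (lincomb d n N c x) (lincomb d n N c y) mod int d
     = bilin N (\<lambda>a b. bilin n W (c a) (c b)) x y mod int d"
  unfolding bilin_gram[symmetric] by (rule bilin_mod_cong) (simp_all add: lincomb_apply)

lemma symmetric_mod_decomposition:
  fixes M V :: "nat \<Rightarrow> nat \<Rightarrow> int"
  assumes "\<And>a b. a < N \<Longrightarrow> b < N \<Longrightarrow> (M a b - M b a) mod m = (V a b - V b a) mod m"
  shows "\<exists>S. (\<forall>a b. S a b = S b a) \<and> (\<forall>a<N. \<forall>b<N. (S a b + V a b) mod m = M a b mod m)"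
proof (intro exI conjI allI impI)
  define S where "S a b = M (min a b) (max a b) - V (min a b) (max a b)" for a b
  show "S a b = S b a" for a b
    unfolding S_def by (simp add: min.commute max.commute)
  show "(S a b + V a b) mod m = M a b mod m" if "a < N" "b < N" for a b
  proof (cases "a \<le> b")
    case False
    have "m dvd (M a b - M b a) - (V a b - V b a)"
      using assms[OF that] by (simp add: mod_eq_dvd_iff)
    then have "m dvd M a b - (S a b + V a b)"
      using False unfolding S_def by (simp add: min_def max_def algebra_simps)
    then show ?thesis by (simp add: mod_eq_dvd_iff dvd_diff_commute)
  qed (simp add: S_def)
qed


section \<open>Symplectic bases\<close>

definition skew_form :: "nat \<Rightarrow> (nat \<Rightarrow> nat \<Rightarrow> int) \<Rightarrow> (nat \<Rightarrow> int) \<Rightarrow> (nat \<Rightarrow> int) \<Rightarrow> int" where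
  "skew_form n W x y = bilin n W x y - bilin n W y x"

lemma skew_form_antisym: "skew_form n W x y = - skew_form n W y x"
  unfolding skew_form_def by simp

lemma skew_form_self [simp]: "skew_form n W x x = 0"
  unfolding skew_form_def by simp

lemma skew_form_sum_left:
  "skew_form n W (\<lambda>i. \<Sum>a\<in>I. t a * c a i) y = (\<Sum>a\<in>I. t a * skew_form n W (c a) y)"
  unfolding skew_form_def
  by (simp add: bilin_sum_left bilin_sum_right sum_subtractf[symmetric] right_diff_distrib)

lemma skew_form_diff_left: "skew_form n W (\<lambda>i. x i - y i) z = skew_form n W x z - skew_form n W y z"
  unfolding skew_form_def by (simp add: bilin_diff_left bilin_diff_right)

lemma skew_form_smult_left: "skew_form n W (\<lambda>i. h * x i) y = h * skew_form n W x y"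
  unfolding skew_form_def by (simp add: bilin_smult_left bilin_smult_right algebra_simps)

lemma skew_form_smult_right: "skew_form n W x (\<lambda>i. h * y i) = h * skew_form n W x y"
  unfolding skew_form_def by (simp add: bilin_smult_left bilin_smult_right algebra_simps)

lemma skew_form_mod_cong:
  assumes "\<And>i. i < n \<Longrightarrow> x i mod m = x' i mod m"
    and "\<And>i. i < n \<Longrightarrow> y i mod m = y' i mod m"
  shows "skew_form n W x y mod m = skew_form n W x' y' mod m"
  unfolding skew_form_def by (rule mod_diff_cong; rule bilin_mod_cong) (use assms in auto)

lemma skew_form_nondegenerate:
  assumes "full_rank_mod d n (omega_mat d W)" "d > 0" "i0 < n" "e i0 mod int d \<noteq> 0"
  obtains i where "i < n" "skew_form n W (unit_vec i) e mod int d \<noteq> 0"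
proof -
  have "\<exists>i<n. skew_form n W (unit_vec i) e mod int d \<noteq> 0"
  proof (rule ccontr)
    assume "\<not> ?thesis"
    then have orth: "skew_form n W (unit_vec i) e mod int d = 0" if "i < n" for i
      using that by blast
    define x where "x = (\<lambda>j\<in>{0..<n}. e j mod int d)"
    have x: "x \<in> zvecs d n" unfolding x_def zvecs_def using assms(2) by auto
    have "(\<Sum>j<n. omega_mat d W i j * x j) mod int d = 0" if "i < n" for i
    proof -
      have "(\<Sum>j<n. omega_mat d W i j * x j) mod int d = (\<Sum>j<n. (W i j - W j i) * e j) mod int d"
        by (rule sum_mod_cong) (auto simp: omega_mat_def x_def mod_mult_eq)
      also have "(\<Sum>j<n. (W i j - W j i) * e j) = skew_form n W (unit_vec i) e"
        unfolding skew_form_def using that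
        by (simp add: bilin_unit_vec_left bilin_unit_vec_right algebra_simps sum_subtractf)
      finally show ?thesis using orth that by simp
    qed
    then have "x i0 = 0" using assms(1,3) x unfolding full_rank_mod_def by blast
    then show False using assms(3,4) unfolding x_def by simp
  qed
  then show thesis using that by blast
qed

text \<open>\<open>J_std\<close> is the block diagonal matrix with blocks \<open>[[0, 1], [-1, 0]]\<close>, pairing the basis
  vectors \<open>2i\<close> and \<open>2i + 1\<close>; \<open>W_std\<close> is its upper triangular half.\<close>

definition partner :: "nat \<Rightarrow> nat" where
  "partner a = (if even a then Suc a else a - 1)"

definition partner_sign :: "nat \<Rightarrow> int" where
  "partner_sign a = (if even a then 1 else -1)"

definition J_std :: "nat \<Rightarrow> nat \<Rightarrow> int" where
  "J_std a b = (if b = partner a then partner_sign a else 0)"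

definition W_std :: "nat \<Rightarrow> nat \<Rightarrow> int" where
  "W_std a b = (if even a \<and> b = Suc a then 1 else 0)"

lemma W_std_skew: "W_std a b - W_std b a = J_std a b"
  unfolding W_std_def J_std_def partner_def partner_sign_def by auto

lemma partner_partner [simp]: "partner (partner a) = a"
  unfolding partner_def by auto

lemma partner_less: "a < 2 * k \<Longrightarrow> partner a < 2 * k"
  unfolding partner_def by auto

lemma partner_sign_square [simp]: "partner_sign a * partner_sign a = 1"
  unfolding partner_sign_def by auto

lemma partner_sign_cancel [simp]: "partner_sign a * x * partner_sign a = x"
  unfolding partner_sign_def by auto

lemma sum_J_std:
  assumes "b < 2 * k"
  shows "(\<Sum>a<2*k. t a * J_std a b) = t (partner b) * partner_sign (partner b)"
proof -
  have "(\<Sum>a<2*k. t a * J_std a b) = (\<Sum>a<2*k. if a = partner b then t a * partner_sign a else 0)"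
    unfolding J_std_def by (rule sum.cong) (auto dest: arg_cong[of _ _ partner])
  then show ?thesis using partner_less[OF assms] by simp
qed

definition symplectic_family :: "nat \<Rightarrow> nat \<Rightarrow> (nat \<Rightarrow> nat \<Rightarrow> int) \<Rightarrow> nat \<Rightarrow> (nat \<Rightarrow> nat \<Rightarrow> int) \<Rightarrow> bool"
  where "symplectic_family d n W k c \<longleftrightarrow>
    (\<forall>a<2*k. \<forall>b<2*k. skew_form n W (c a) (c b) mod int d = J_std a b mod int d)"

lemma symplectic_family_sum:
  assumes "symplectic_family d n W k c" "b < 2 * k"
  shows "(\<Sum>a<2*k. t a * skew_form n W (c a) (c b)) mod int d
    = (t (partner b) * partner_sign (partner b)) mod int d"
proof -
  have "(\<Sum>a<2*k. t a * skew_form n W (c a) (c b)) mod int d = (\<Sum>a<2*k. t a * J_std a b) mod int d"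
    using assms unfolding symplectic_family_def by (intro sum_mod_cong) (auto intro: mod_mult_cong)
  then show ?thesis using sum_J_std[OF assms(2)] by simp
qed

lemma skew_form_lincomb:
  assumes "symplectic_family d n W k c" "b < 2 * k"
  shows "skew_form n W (lincomb d n (2*k) c x) (c b) mod int d
    = (x (partner b) * partner_sign (partner b)) mod int d"
proof -
  have "skew_form n W (lincomb d n (2*k) c x) (c b) mod int d
      = skew_form n W (\<lambda>i. \<Sum>a<2*k. x a * c a i) (c b) mod int d"
    by (rule skew_form_mod_cong) (auto simp: lincomb_apply)
  then show ?thesis using symplectic_family_sum[OF assms] by (simp add: skew_form_sum_left)
qed

lemma inj_on_lincomb:
  assumes "symplectic_family d n W k c"
  shows "inj_on (lincomb d n (2*k) c) (zvecs d (2*k))"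
proof (rule inj_onI)
  fix x y assume x: "x \<in> zvecs d (2*k)" and y: "y \<in> zvecs d (2*k)"
    and eq: "lincomb d n (2*k) c x = lincomb d n (2*k) c y"
  show "x = y"
  proof (rule zvecs_eqI[OF x y])
    fix a assume a: "a < 2 * k"
    have "(z a * partner_sign a) mod int d
        = skew_form n W (lincomb d n (2*k) c z) (c (partner a)) mod int d" for z
      using skew_form_lincomb[OF assms partner_less[OF a], of z] by simp
    then have "(x a * partner_sign a) mod int d = (y a * partner_sign a) mod int d"
      using eq by metis
    then have "(x a * partner_sign a * partner_sign a) mod int d
        = (y a * partner_sign a * partner_sign a) mod int d"
      by (rule mod_mult_cong) simp
    then show "x a = y a" using zvecs_mod[OF x a] zvecs_mod[OF y a] by (simp add: mult.assoc)
  qed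
qed

lemma symplectic_family_size:
  assumes "d > 1" "symplectic_family d n W k c"
  shows "2 * k \<le> n"
proof -
  have "card (zvecs d (2*k)) \<le> card (zvecs d n)"
    by (rule card_inj_on_le[OF inj_on_lincomb[OF assms(2)]])
      (use assms lincomb_in_zvecs finite_zvecs in auto)
  then show ?thesis using assms(1) power_le_imp_le_exp by (simp add: card_zvecs)
qed

lemma bij_betw_lincomb:
  assumes "d > 1" "even n" "symplectic_family d n W (n div 2) c"
  shows "bij_betw (lincomb d n n c) (zvecs d n) (zvecs d n)"
proof -
  have inj: "inj_on (lincomb d n n c) (zvecs d n)"
    using inj_on_lincomb[OF assms(3)] assms(2) by simp
  moreover have "lincomb d n n c ` zvecs d n \<subseteq> zvecs d n"
    using lincomb_in_zvecs assms(1) by auto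
  ultimately show ?thesis
    unfolding bij_betw_def using endo_inj_surj[OF finite_zvecs] by blast
qed

text \<open>Symplectic Gram-Schmidt: remove from \<open>v\<close> its components along the family.\<close>

definition orth_proj ::
  "nat \<Rightarrow> (nat \<Rightarrow> nat \<Rightarrow> int) \<Rightarrow> nat \<Rightarrow> (nat \<Rightarrow> nat \<Rightarrow> int) \<Rightarrow> (nat \<Rightarrow> int) \<Rightarrow> nat \<Rightarrow> int"
  where "orth_proj n W k c v =
    (\<lambda>i. v i - (\<Sum>a<2*k. partner_sign a * skew_form n W v (c (partner a)) * c a i))"

lemma skew_form_orth_proj_family:
  assumes "symplectic_family d n W k c" "b < 2 * k"
  shows "skew_form n W (orth_proj n W k c v) (c b) mod int d = 0"
proof -
  have "(\<Sum>a<2*k. partner_sign a * skew_form n W v (c (partner a)) * skew_form n W (c a) (c b)) mod int d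
      = skew_form n W v (c b) mod int d"
    using symplectic_family_sum[OF assms, of "\<lambda>a. partner_sign a * skew_form n W v (c (partner a))"]
    by simp
  then show ?thesis
    unfolding orth_proj_def
    by (simp add: skew_form_diff_left skew_form_sum_left mod_eq_dvd_iff dvd_diff_commute
        flip: dvd_eq_mod_eq_0)
qed

lemma skew_form_orth_proj:
  assumes "\<And>a. a < 2 * k \<Longrightarrow> skew_form n W w (c a) mod int d = 0"
  shows "skew_form n W (orth_proj n W k c v) w mod int d = skew_form n W v w mod int d"
proof -
  have "skew_form n W (c a) w mod int d = 0" if "a < 2 * k" for a
    using assms[OF that] skew_form_antisym[of n W w "c a"] by (simp flip: dvd_eq_mod_eq_0)
  then have "(\<Sum>a<2*k. partner_sign a * skew_form n W v (c (partner a)) * skew_form n W (c a) w)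
      mod int d = 0"
    by (subst mod_sum_eq[symmetric]) (simp add: mod_mult_right_eq[of _ "skew_form n W (c _) w", symmetric])
  then show ?thesis
    unfolding orth_proj_def skew_form_diff_left skew_form_sum_left
    by (metis diff_zero mod_diff_right_eq)
qed

lemma exists_orth_proj_nonzero:
  assumes "d > 1" "symplectic_family d n W k c" "2 * k < n"
  obtains v i where "v \<in> zvecs d n" "i < n" "orth_proj n W k c v i mod int d \<noteq> 0"
proof -
  have "zvecs d n \<subseteq> lincomb d n (2*k) c ` zvecs d (2*k)"
    if vanish: "\<And>v i. v \<in> zvecs d n \<Longrightarrow> i < n \<Longrightarrow> orth_proj n W k c v i mod int d = 0"
  proof
    fix v assume v: "v \<in> zvecs d n"
    define t where
      "t = (\<lambda>a\<in>{0..<2*k}. (partner_sign a * skew_form n W v (c (partner a))) mod int d)"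
    have t: "t \<in> zvecs d (2*k)" unfolding t_def zvecs_def using assms(1) by auto
    have "lincomb d n (2*k) c t i = v i" if i: "i < n" for i
    proof -
      have "lincomb d n (2*k) c t i
          = (\<Sum>a<2*k. partner_sign a * skew_form n W v (c (partner a)) * c a i) mod int d"
        unfolding lincomb_apply[OF i] by (rule sum_mod_cong) (simp add: t_def mod_mult_left_eq)
      also have "\<dots> = v i mod int d"
        using vanish[OF v i] unfolding orth_proj_def
        by (simp add: mod_eq_dvd_iff dvd_diff_commute flip: dvd_eq_mod_eq_0)
      finally show ?thesis using zvecs_mod[OF v i] by simp
    qed
    then have "lincomb d n (2*k) c t = v"
      using zvecs_eqI[OF lincomb_in_zvecs v] assms(1) by simp
    then show "v \<in> lincomb d n (2*k) c ` zvecs d (2*k)" using t by blast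
  qed
  moreover have "\<not> zvecs d n \<subseteq> lincomb d n (2*k) c ` zvecs d (2*k)"
  proof
    assume "zvecs d n \<subseteq> lincomb d n (2*k) c ` zvecs d (2*k)"
    then have "card (zvecs d n) \<le> card (zvecs d (2*k))"
      using surj_card_le[OF finite_zvecs] by blast
    then have "n \<le> 2 * k" using assms(1) power_le_imp_le_exp by (simp add: card_zvecs)
    then show False using assms(3) by simp
  qed
  ultimately show thesis using that by blast
qed

lemma exists_hyperbolic_pair:
  assumes "prime d" "full_rank_mod d n (omega_mat d W)" "symplectic_family d n W k c" "2 * k < n"
  obtains e f where "\<And>a. a < 2 * k \<Longrightarrow> skew_form n W e (c a) mod int d = 0"
    and "\<And>a. a < 2 * k \<Longrightarrow> skew_form n W f (c a) mod int d = 0"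
    and "skew_form n W e f mod int d = 1"
proof -
  have d1: "d > 1" using assms(1) prime_gt_1_nat by blast
  obtain v i0 where "i0 < n" and nz: "orth_proj n W k c v i0 mod int d \<noteq> 0"
    using exists_orth_proj_nonzero[OF d1 assms(3,4)] by blast
  define e where "e = orth_proj n W k c v"
  have e_orth: "skew_form n W e (c a) mod int d = 0" if "a < 2 * k" for a
    unfolding e_def by (rule skew_form_orth_proj_family[OF assms(3) that])
  obtain i where "skew_form n W (unit_vec i) e mod int d \<noteq> 0"
    using skew_form_nondegenerate[OF assms(2) _ \<open>i0 < n\<close>] nz d1 unfolding e_def by auto
  moreover define f0 where "f0 = orth_proj n W k c (unit_vec i)"
  ultimately have "skew_form n W f0 e mod int d \<noteq> 0"
    using skew_form_orth_proj[OF e_orth] by simp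
  then have "skew_form n W e f0 mod int d \<noteq> 0"
    using skew_form_antisym[of n W f0 e] by (simp flip: dvd_eq_mod_eq_0)
  then obtain h where h: "(skew_form n W e f0 * h) mod int d = 1"
    using mod_inverse_prime[OF assms(1)] by blast
  define f where "f = (\<lambda>j. h * f0 j)"
  show thesis
  proof (rule that[of e f])
    show "skew_form n W e (c a) mod int d = 0" if "a < 2 * k" for a
      using e_orth[OF that] .
    show "skew_form n W f (c a) mod int d = 0" if "a < 2 * k" for a
      using skew_form_orth_proj_family[OF assms(3) that, of "unit_vec i"]
      unfolding f_def f0_def skew_form_smult_left by (metis mod_mult_right_eq mult_zero_right mod_0)
    show "skew_form n W e f mod int d = 1"
      using h unfolding f_def skew_form_smult_right by (simp add: mult.commute)
  qed
qed

lemma symplectic_family_extend: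
  assumes c: "symplectic_family d n W k c" and "d > 1"
    and e: "\<And>a. a < 2 * k \<Longrightarrow> skew_form n W e (c a) mod int d = 0"
    and f: "\<And>a. a < 2 * k \<Longrightarrow> skew_form n W f (c a) mod int d = 0"
    and ef: "skew_form n W e f mod int d = 1"
  shows "symplectic_family d n W (Suc k) (c(2*k := e, Suc (2*k) := f))"
proof -
  let ?c = "c(2*k := e, Suc (2*k) := f)"
  have e': "skew_form n W (c a) e mod int d = 0" and f': "skew_form n W (c a) f mod int d = 0"
    if "a < 2 * k" for a
    using e[OF that] f[OF that] skew_form_antisym[of n W "c a"] by (simp_all flip: dvd_eq_mod_eq_0)
  have fe: "skew_form n W f e mod int d = - 1 mod int d"
    using ef skew_form_antisym[of n W f e] by (metis mod_minus_eq)
  have J_old: "J_std a (2*k) = 0" "J_std a (Suc (2*k)) = 0"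
    "J_std (2*k) a = 0" "J_std (Suc (2*k)) a = 0" if "a < 2 * k" for a
    using that unfolding J_std_def partner_def by auto presburger+
  have J_new: "J_std (2*k) (Suc (2*k)) = 1" "J_std (Suc (2*k)) (2*k) = -1"
    "J_std (2*k) (2*k) = 0" "J_std (Suc (2*k)) (Suc (2*k)) = 0"
    unfolding J_std_def partner_def partner_sign_def by auto
  have "skew_form n W (?c a) (?c b) mod int d = J_std a b mod int d"
    if "a < 2 * Suc k" "b < 2 * Suc k" for a b
  proof -
    have "a < 2 * k \<or> a = 2 * k \<or> a = Suc (2 * k)" "b < 2 * k \<or> b = 2 * k \<or> b = Suc (2 * k)"
      using that by auto
    then show ?thesis
      using c e f e' f' ef fe J_old J_new \<open>d > 1\<close>
      unfolding symplectic_family_def by (elim disjE) auto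
  qed
  then show ?thesis unfolding symplectic_family_def by blast
qed

theorem symplectic_basis_exists:
  assumes "prime d" "full_rank_mod d n (omega_mat d W)"
  shows "even n" and "\<exists>c. symplectic_family d n W (n div 2) c"
proof -
  have d1: "d > 1" using assms(1) prime_gt_1_nat by blast
  have extend: "\<exists>c'. symplectic_family d n W (Suc k) c'"
    if "symplectic_family d n W k c" "2 * k < n" for k c
    using exists_hyperbolic_pair[OF assms that] symplectic_family_extend[OF that(1) d1] by metis
  have family: "\<exists>c. symplectic_family d n W k c" if "2 * k \<le> n" for k
    using that
  proof (induction k)
    case 0
    then show ?case unfolding symplectic_family_def by simp
  next
    case (Suc k)
    then show ?case using extend by force
  qed
  then show "\<exists>c. symplectic_family d n W (n div 2) c" by simp
  show "even n"
  proof (rule ccontr)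
    assume "odd n"
    then have "2 * (n div 2) < n" by presburger
    then obtain c where "symplectic_family d n W (Suc (n div 2)) c"
      using family[of "n div 2"] extend by force
    then show False using symplectic_family_size[OF d1] \<open>odd n\<close> by fastforce
  qed
qed

lemma symplectic_gram_decomposition:
  assumes "even n" "symplectic_family d n W (n div 2) c"
  obtains S where "\<And>a b. S a b = S b a"
    and "\<And>x y. bilin n W (lincomb d n n c x) (lincomb d n n c y) mod int d
      = (bilin n S x y + bilin n W_std x y) mod int d"
proof -
  let ?M = "\<lambda>a b. bilin n W (c a) (c b)"
  have skew: "(?M a b - ?M b a) mod int d = (W_std a b - W_std b a) mod int d"
    if "a < n" "b < n" for a b
    using assms that unfolding symplectic_family_def skew_form_def W_std_skew by simp
  have "\<exists>S. (\<forall>a b. S a b = S b a)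
      \<and> (\<forall>a<n. \<forall>b<n. (S a b + W_std a b) mod int d = ?M a b mod int d)"
    by (rule symmetric_mod_decomposition) (rule skew)
  then obtain S where S_sym: "\<And>a b. S a b = S b a"
    and S_sum: "\<And>a b. a < n \<Longrightarrow> b < n \<Longrightarrow> (S a b + W_std a b) mod int d = ?M a b mod int d"
    by blast
  have "bilin n W (lincomb d n n c x) (lincomb d n n c y) mod int d
      = (bilin n S x y + bilin n W_std x y) mod int d" for x y
  proof -
    have "bilin n W (lincomb d n n c x) (lincomb d n n c y) mod int d = bilin n ?M x y mod int d"
      by (rule bilin_lincomb)
    also have "\<dots> = bilin n (\<lambda>a b. S a b + W_std a b) x y mod int d"
      using S_sum by (intro bilin_mod_cong_matrix) simp
    finally show ?thesis by (simp only: bilin_add_matrix)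
  qed
  with S_sym show thesis using that by blast
qed


section \<open>Twisted products\<close>

text \<open>Merging \<open>(a, p)\<close> into \<open>a \<otimes> \<zeta> p\<close> identifies the polar group with the case \<open>g = \<zeta> 1\<close>.\<close>

definition twisted_group :: "nat \<Rightarrow> nat \<Rightarrow> ('a, 'b) monoid_scheme \<Rightarrow> 'a \<Rightarrow> (nat \<Rightarrow> nat \<Rightarrow> int)
    \<Rightarrow> ('a \<times> (nat \<Rightarrow> int)) monoid" where
  "twisted_group d n A g W =
    \<lparr>carrier = carrier A \<times> zvecs d n,
     monoid.mult = (\<lambda>(\<alpha>, x) (\<beta>, y).
       (\<alpha> \<otimes>\<^bsub>A\<^esub> \<beta> \<otimes>\<^bsub>A\<^esub> g [^]\<^bsub>A\<^esub> bilin n W x y, zvec_add d n x y)),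
     one = (\<one>\<^bsub>A\<^esub>, \<lambda>i\<in>{0..<n}. 0)\<rparr>"

lemma carrier_twisted_group [simp]: "carrier (twisted_group d n A g W) = carrier A \<times> zvecs d n"
  by (simp add: twisted_group_def)

lemma twisted_group_mult [simp]:
  "(\<alpha>, x) \<otimes>\<^bsub>twisted_group d n A g W\<^esub> (\<beta>, y)
    = (\<alpha> \<otimes>\<^bsub>A\<^esub> \<beta> \<otimes>\<^bsub>A\<^esub> g [^]\<^bsub>A\<^esub> bilin n W x y, zvec_add d n x y)"
  by (simp add: twisted_group_def)

lemma twisted_group_mult_closed:
  assumes "group A" "g \<in> carrier A"
    and "u \<in> carrier (twisted_group d n A g W)" "v \<in> carrier (twisted_group d n A g W)"
  shows "u \<otimes>\<^bsub>twisted_group d n A g W\<^esub> v \<in> carrier (twisted_group d n A g W)"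
  using assms group.int_pow_closed[OF assms(1,2)] group.subgroup_self[OF assms(1)]
  by (auto simp: zvec_add_in_zvecs subgroup.m_closed)

text \<open>\<open>group.iso_sym\<close> needs \<open>group G\<close>; closure of \<open>G\<close> under its multiplication suffices.\<close>

lemma iso_sym_mult_closed:
  assumes "G \<cong> H" and closed: "\<And>x y. x \<in> carrier G \<Longrightarrow> y \<in> carrier G \<Longrightarrow> x \<otimes>\<^bsub>G\<^esub> y \<in> carrier G"
  shows "H \<cong> G"
proof -
  obtain h where h: "h \<in> hom G H" "bij_betw h (carrier G) (carrier H)"
    using assms(1) unfolding is_iso_def iso_def by blast
  let ?h' = "inv_into (carrier G) h"
  have h': "bij_betw ?h' (carrier H) (carrier G)" by (rule bij_betw_inv_into[OF h(2)])
  have "?h' \<in> hom H G"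
  proof (rule homI)
    show "?h' x \<in> carrier G" if "x \<in> carrier H" for x using bij_betwE[OF h'] that by blast
    show "?h' (x \<otimes>\<^bsub>H\<^esub> y) = ?h' x \<otimes>\<^bsub>G\<^esub> ?h' y" if "x \<in> carrier H" "y \<in> carrier H" for x y
    proof (rule inv_into_f_eq)
      show "inj_on h (carrier G)" using h(2) by (rule bij_betw_imp_inj_on)
      show "?h' x \<otimes>\<^bsub>G\<^esub> ?h' y \<in> carrier G" using bij_betwE[OF h'] that closed by blast
      show "h (?h' x \<otimes>\<^bsub>G\<^esub> ?h' y) = x \<otimes>\<^bsub>H\<^esub> y"
        using h bij_betwE[OF h'] that bij_betw_inv_into_right[OF h(2)] unfolding hom_def by simp
    qed
  qed
  then show ?thesis using h' unfolding is_iso_def iso_def by blast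
qed

lemma (in group) bij_betw_twisted_map:
  assumes "bij_betw \<psi> X Y" "\<And>x. x \<in> X \<Longrightarrow> \<phi> x \<in> carrier G"
  shows "bij_betw (\<lambda>(\<alpha>, x). (\<alpha> \<otimes> \<phi> x, \<psi> x)) (carrier G \<times> X) (carrier G \<times> Y)"
proof (rule bij_betw_byWitness[where f' = "\<lambda>(\<beta>, y). (\<beta> \<otimes> inv \<phi> (inv_into X \<psi> y), inv_into X \<psi> y)"])
  have \<psi>: "inv_into X \<psi> (\<psi> x) = x" "\<psi> x \<in> Y" if "x \<in> X" for x
    using that assms(1) by (auto simp: bij_betw_def)
  have \<psi>': "\<psi> (inv_into X \<psi> y) = y" "inv_into X \<psi> y \<in> X" if "y \<in> Y" for y
    using that assms(1) by (auto simp: bij_betw_def f_inv_into_f inv_into_into)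
  show "\<forall>u \<in> carrier G \<times> X. (\<lambda>(\<beta>, y). (\<beta> \<otimes> inv \<phi> (inv_into X \<psi> y), inv_into X \<psi> y))
      ((\<lambda>(\<alpha>, x). (\<alpha> \<otimes> \<phi> x, \<psi> x)) u) = u"
    using \<psi> assms(2) by (auto simp: m_assoc)
  show "\<forall>w \<in> carrier G \<times> Y. (\<lambda>(\<alpha>, x). (\<alpha> \<otimes> \<phi> x, \<psi> x))
      ((\<lambda>(\<beta>, y). (\<beta> \<otimes> inv \<phi> (inv_into X \<psi> y), inv_into X \<psi> y)) w) = w"
    using \<psi>' assms(2) by (auto simp: m_assoc)
  show "(\<lambda>(\<alpha>, x). (\<alpha> \<otimes> \<phi> x, \<psi> x)) ` (carrier G \<times> X) \<subseteq> carrier G \<times> Y"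
    using \<psi> assms(2) by auto
  show "(\<lambda>(\<beta>, y). (\<beta> \<otimes> inv \<phi> (inv_into X \<psi> y), inv_into X \<psi> y)) ` (carrier G \<times> Y)
      \<subseteq> carrier G \<times> X"
    using \<psi>' assms(2) by auto
qed

lemma (in comm_group) twisted_group_iso:
  assumes "g \<in> carrier G"
    and bij: "bij_betw \<psi> (zvecs d n) (zvecs d n)"
    and add: "\<And>x y. x \<in> zvecs d n \<Longrightarrow> y \<in> zvecs d n \<Longrightarrow>
      \<psi> (zvec_add d n x y) = zvec_add d n (\<psi> x) (\<psi> y)"
    and \<phi>: "\<And>x. x \<in> zvecs d n \<Longrightarrow> \<phi> x \<in> carrier G"
    and twist: "\<And>x y. x \<in> zvecs d n \<Longrightarrow> y \<in> zvecs d n \<Longrightarrow>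
      \<phi> (zvec_add d n x y) \<otimes> g [^] bilin n W\<^sub>1 x y
        = \<phi> x \<otimes> \<phi> y \<otimes> g [^] bilin n W\<^sub>2 (\<psi> x) (\<psi> y)"
  shows "(\<lambda>(\<alpha>, x). (\<alpha> \<otimes> \<phi> x, \<psi> x))
    \<in> iso (twisted_group d n G g W\<^sub>1) (twisted_group d n G g W\<^sub>2)"
proof -
  let ?\<Theta> = "\<lambda>(\<alpha>, x). (\<alpha> \<otimes> \<phi> x, \<psi> x)"
  have bij\<Theta>: "bij_betw ?\<Theta> (carrier (twisted_group d n G g W\<^sub>1)) (carrier (twisted_group d n G g W\<^sub>2))"
    using bij_betw_twisted_map[OF bij \<phi>] by simp
  have "?\<Theta> \<in> hom (twisted_group d n G g W\<^sub>1) (twisted_group d n G g W\<^sub>2)"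
  proof (rule homI)
    show "?\<Theta> u \<in> carrier (twisted_group d n G g W\<^sub>2)"
      if "u \<in> carrier (twisted_group d n G g W\<^sub>1)" for u
      using bij_betwE[OF bij\<Theta>] that by blast
    fix u v assume "u \<in> carrier (twisted_group d n G g W\<^sub>1)" "v \<in> carrier (twisted_group d n G g W\<^sub>1)"
    then obtain \<alpha> x \<beta> y where u: "u = (\<alpha>, x)" "\<alpha> \<in> carrier G" "x \<in> zvecs d n"
      and v: "v = (\<beta>, y)" "\<beta> \<in> carrier G" "y \<in> zvecs d n" by auto
    have "\<alpha> \<otimes> \<beta> \<otimes> g [^] bilin n W\<^sub>1 x y \<otimes> \<phi> (zvec_add d n x y)
        = \<alpha> \<otimes> \<beta> \<otimes> (\<phi> (zvec_add d n x y) \<otimes> g [^] bilin n W\<^sub>1 x y)"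
      using u v \<phi> assms(1) zvec_add_in_zvecs by (simp add: m_ac)
    also have "\<dots> = \<alpha> \<otimes> \<beta> \<otimes> (\<phi> x \<otimes> \<phi> y \<otimes> g [^] bilin n W\<^sub>2 (\<psi> x) (\<psi> y))"
      using twist[OF u(3) v(3)] by simp
    also have "\<dots> = \<alpha> \<otimes> \<phi> x \<otimes> (\<beta> \<otimes> \<phi> y) \<otimes> g [^] bilin n W\<^sub>2 (\<psi> x) (\<psi> y)"
      using u v \<phi> assms(1) by (simp add: m_ac)
    finally show "?\<Theta> (u \<otimes>\<^bsub>twisted_group d n G g W\<^sub>1\<^esub> v)
        = ?\<Theta> u \<otimes>\<^bsub>twisted_group d n G g W\<^sub>2\<^esub> ?\<Theta> v"
      using u v by (simp add: add)
  qed
  with bij\<Theta> show ?thesis unfolding iso_def by blast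
qed

lemma (in comm_group) quadratic_refinement:
  assumes t: "t \<in> carrier G" "t [^] (2 * int d) = \<one>" "t [^] (int d * int d) = \<one>"
    and S: "\<And>i j. S i j = S j i"
  shows "t [^] bilin n S (zvec_add d n x y) (zvec_add d n x y)
    = t [^] bilin n S x x \<otimes> t [^] bilin n S y y \<otimes> t [^] (2 * bilin n S x y)"
proof -
  define w where "w i = (x i + y i) div int d" for i
  define C where "C = bilin n S x w + bilin n S y w"
  have "\<And>i. i < n \<Longrightarrow> zvec_add d n x y i = x i + y i - int d * w i"
    unfolding zvec_add_def w_def by (simp add: minus_div_mult_eq_mod[symmetric])
  from bilin_expand_square[where z = "zvec_add d n x y" and m = "int d" and w = w and S = S, OF this]
  have "bilin n S (zvec_add d n x y) (zvec_add d n x y) = bilin n S x x + bilin n S y y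
      + 2 * bilin n S x y + (2 * int d) * (- C) + (int d * int d) * bilin n S w w"
    using bilin_sym[where S = S and x = y and y = x, OF S] bilin_sym[where S = S and x = w and y = x, OF S]
      bilin_sym[where S = S and x = w and y = y, OF S]
    unfolding C_def by (simp add: algebra_simps)
  then have "t [^] bilin n S (zvec_add d n x y) (zvec_add d n x y)
      = t [^] bilin n S x x \<otimes> t [^] bilin n S y y \<otimes> t [^] (2 * bilin n S x y)
        \<otimes> t [^] ((2 * int d) * (- C)) \<otimes> t [^] ((int d * int d) * bilin n S w w)"
    using t(1) by (simp only: int_pow_mult)
  moreover have "t [^] (m * k) = \<one>" if "t [^] m = \<one>" for m k :: int
    by (simp only: int_pow_pow[OF t(1), of m k, symmetric] that int_pow_one)
  ultimately show ?thesis using t by (simp only:) simp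
qed

lemma (in comm_group) square_root_of_torsion:
  assumes "b \<in> carrier G" "b \<otimes> b = g" "g [^] int d = \<one>"
  obtains t where "t \<in> carrier G" "t [^] (2::int) = g"
    "t [^] (2 * int d) = \<one>" "t [^] (int d * int d) = \<one>"
proof
  \<comment> \<open>\<open>b\<close> itself need not satisfy \<open>b [^] (d * d) = \<one>\<close> when \<open>d\<close> is odd.\<close>
  define t where "t = b [^] (int d + 1)"
  have b2: "b [^] (2 * k) = g [^] k" for k :: int
  proof -
    have "b [^] (2::int) = g"
      using assms(1,2) int_pow_int[of G b 2] by (simp add: numeral_2_eq_2)
    then show ?thesis using assms(1) by (simp add: int_pow_pow[symmetric])
  qed
  have g: "g \<in> carrier G" using assms(1,2) by auto
  have gd: "g [^] (int d * k) = \<one>" for k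
    using int_pow_pow[OF g, of "int d" k] assms(3) by simp
  show "t \<in> carrier G" unfolding t_def using assms(1) by simp
  have "t [^] (2::int) = b [^] ((int d + 1) * 2)"
    unfolding t_def using int_pow_pow[OF assms(1)] by simp
  also have "\<dots> = g [^] (int d + 1)"
    using b2 by (metis mult.commute)
  also have "\<dots> = g"
    using g gd[of 1] by (simp add: int_pow_mult)
  finally show t2: "t [^] (2::int) = g" .
  show "t [^] (2 * int d) = \<one>"
    using t2 gd[of 1] \<open>t \<in> carrier G\<close> by (simp add: int_pow_pow[symmetric])
  obtain q where q: "(int d + 1) * int d = 2 * q"
    by (metis even_mult_iff even_add odd_one dvd_def)
  have "t [^] (int d * int d) = b [^] (2 * (q * int d))"
    unfolding t_def using assms(1) q by (simp add: int_pow_pow mult.assoc[symmetric])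
  then show "t [^] (int d * int d) = \<one>" using b2 gd by (simp add: mult.commute)
qed

lemma (in group) int_pow_mod_cong:
  fixes k l m :: int
  assumes "x \<in> carrier G" "x [^] m = \<one>" "k mod m = l mod m"
  shows "x [^] k = x [^] l"
proof -
  have "int (ord x) dvd m" using int_pow_eq_id assms(1,2) by simp
  moreover have "m dvd l - k" using assms(3) by (simp add: mod_eq_dvd_iff dvd_diff_commute)
  ultimately show ?thesis using int_pow_eq[OF assms(1)] dvd_trans by blast
qed

lemma (in comm_group) twisted_group_std_iso:
  assumes t: "t \<in> carrier G" "t [^] (2 * int d) = \<one>" "t [^] (int d * int d) = \<one>"
    and "d > 1" "even n" and c: "symplectic_family d n W (n div 2) c"
  shows "twisted_group d n G (t [^] (2::int)) W_std \<cong> twisted_group d n G (t [^] (2::int)) W"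
proof -
  define g where "g = t [^] (2::int)"
  have g: "g \<in> carrier G" unfolding g_def using t(1) by simp
  have g_d: "g [^] int d = \<one>"
    unfolding g_def using int_pow_pow[OF t(1), of 2 "int d"] t(2) by simp
  obtain S where S_sym: "\<And>a b. S a b = S b a"
    and S_gram: "\<And>x y. bilin n W (lincomb d n n c x) (lincomb d n n c y) mod int d
      = (bilin n S x y + bilin n W_std x y) mod int d"
    using symplectic_gram_decomposition[OF \<open>even n\<close> c] by blast
  define \<phi> where "\<phi> x = t [^] bilin n S x x" for x
  have "twisted_group d n G g W_std \<cong> twisted_group d n G g W"
  proof (rule is_isoI, rule twisted_group_iso[OF g])
    show "bij_betw (lincomb d n n c) (zvecs d n) (zvecs d n)"
      using bij_betw_lincomb \<open>d > 1\<close> \<open>even n\<close> c by blast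
    show "lincomb d n n c (zvec_add d n x y) = zvec_add d n (lincomb d n n c x) (lincomb d n n c y)"
      for x y by (rule lincomb_add)
    show "\<phi> x \<in> carrier G" for x unfolding \<phi>_def using t(1) by simp
    fix x y
    have "g [^] bilin n W (lincomb d n n c x) (lincomb d n n c y)
        = g [^] bilin n S x y \<otimes> g [^] bilin n W_std x y"
      using int_pow_mod_cong[OF g g_d S_gram] int_pow_mult[OF g] by simp
    moreover have "g [^] bilin n S x y = t [^] (2 * bilin n S x y)"
      unfolding g_def by (rule int_pow_pow[OF t(1)])
    then have "\<phi> (zvec_add d n x y) = \<phi> x \<otimes> \<phi> y \<otimes> g [^] bilin n S x y"
      unfolding \<phi>_def using quadratic_refinement[OF t S_sym] by simp
    ultimately show "\<phi> (zvec_add d n x y) \<otimes> g [^] bilin n W_std x y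
      = \<phi> x \<otimes> \<phi> y \<otimes> g [^] bilin n W (lincomb d n n c x) (lincomb d n n c y)"
      unfolding \<phi>_def using t(1) g by (simp add: m_assoc)
  qed
  then show ?thesis unfolding g_def .
qed


section \<open>The polar group as a twisted product\<close>

locale polar_setting =
  fixes d :: nat and A :: "('a, 'b) monoid_scheme" and \<zeta> :: "int \<Rightarrow> 'a" and F :: "'a set"
  assumes d_gt_1: "d > 1"
    and comm_group: "comm_group A"
    and \<zeta>_hom: "\<zeta> \<in> hom (integer_mod_group d) A" and \<zeta>_inj: "inj_on \<zeta> {0..<int d}"
    and transversal: "is_transversal A d \<zeta> F"
begin

sublocale A: comm_group A by (rule comm_group)

lemma \<zeta>_in_carrier: "k \<in> {0..<int d} \<Longrightarrow> \<zeta> k \<in> carrier A"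
  using \<zeta>_hom d_gt_1 unfolding hom_def by (auto simp: carrier_integer_mod_group)

lemma F_subset: "F \<subseteq> carrier A"
  using transversal unfolding is_transversal_def by simp

lemma \<zeta>_mod_eq_pow: "\<zeta> (k mod int d) = \<zeta> 1 [^]\<^bsub>A\<^esub> k"
proof -
  have "1 \<in> carrier (integer_mod_group d)" using d_gt_1 by simp
  from hom_int_pow[OF \<zeta>_hom this group_integer_mod_group A.is_group, of k]
  show ?thesis by (simp add: int_pow_integer_mod_group)
qed

lemma \<zeta>_eq_pow: "k \<in> {0..<int d} \<Longrightarrow> \<zeta> k = \<zeta> 1 [^]\<^bsub>A\<^esub> k"
  using \<zeta>_mod_eq_pow[of k] by simp

lemma \<zeta>_1_pow_d: "\<zeta> 1 [^]\<^bsub>A\<^esub> int d = \<one>\<^bsub>A\<^esub>"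
  using \<zeta>_mod_eq_pow[of "int d"] hom_one[OF \<zeta>_hom group_integer_mod_group A.is_group] by simp

lemma transversal_decomp_unique:
  assumes "f \<in> F" "k \<in> {0..<int d}" "f' \<in> F" "k' \<in> {0..<int d}"
    and "f \<otimes>\<^bsub>A\<^esub> \<zeta> k = f' \<otimes>\<^bsub>A\<^esub> \<zeta> k'"
  shows "f = f'" "k = k'"
proof -
  show "f = f'"
    using transversal assms F_subset \<zeta>_in_carrier unfolding is_transversal_def by blast
  then have "\<zeta> k = \<zeta> k'"
    using assms F_subset \<zeta>_in_carrier by (simp add: subset_iff)
  then show "k = k'" using inj_onD[OF \<zeta>_inj] assms(2,4) by blast
qed

lemma rep_decomp:
  assumes "a \<in> carrier A"
  shows "rep_r A d \<zeta> F a \<in> F" "rep_u A d \<zeta> F a \<in> {0..<int d}"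
    and "rep_r A d \<zeta> F a \<otimes>\<^bsub>A\<^esub> \<zeta> (rep_u A d \<zeta> F a) = a"
proof -
  have "\<exists>!f. f \<in> F \<and> (\<exists>k \<in> {0..<int d}. a = f \<otimes>\<^bsub>A\<^esub> \<zeta> k)"
    using transversal assms unfolding is_transversal_def by blast
  then have r: "rep_r A d \<zeta> F a \<in> F \<and> (\<exists>k \<in> {0..<int d}. a = rep_r A d \<zeta> F a \<otimes>\<^bsub>A\<^esub> \<zeta> k)"
    unfolding rep_r_def by (rule theI')
  then obtain k where k: "k \<in> {0..<int d}" "a = rep_r A d \<zeta> F a \<otimes>\<^bsub>A\<^esub> \<zeta> k" by blast
  moreover have "k' = k" if "k' \<in> {0..<int d}" "a = rep_r A d \<zeta> F a \<otimes>\<^bsub>A\<^esub> \<zeta> k'" for k'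
    using transversal_decomp_unique(2)[of _ k' _ k] r k that by metis
  ultimately have "\<exists>!k. k \<in> {0..<int d} \<and> a = rep_r A d \<zeta> F a \<otimes>\<^bsub>A\<^esub> \<zeta> k" by blast
  then have "rep_u A d \<zeta> F a \<in> {0..<int d} \<and> a = rep_r A d \<zeta> F a \<otimes>\<^bsub>A\<^esub> \<zeta> (rep_u A d \<zeta> F a)"
    unfolding rep_u_def by (rule theI')
  with r show "rep_r A d \<zeta> F a \<in> F" "rep_u A d \<zeta> F a \<in> {0..<int d}"
    "rep_r A d \<zeta> F a \<otimes>\<^bsub>A\<^esub> \<zeta> (rep_u A d \<zeta> F a) = a" by auto
qed

lemma rep_of_decomp:
  assumes "f \<in> F" "k \<in> {0..<int d}"
  shows "rep_r A d \<zeta> F (f \<otimes>\<^bsub>A\<^esub> \<zeta> k) = f" "rep_u A d \<zeta> F (f \<otimes>\<^bsub>A\<^esub> \<zeta> k) = k"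
proof -
  have "f \<otimes>\<^bsub>A\<^esub> \<zeta> k \<in> carrier A" using assms F_subset \<zeta>_in_carrier by auto
  from rep_decomp[OF this] show "rep_r A d \<zeta> F (f \<otimes>\<^bsub>A\<^esub> \<zeta> k) = f" "rep_u A d \<zeta> F (f \<otimes>\<^bsub>A\<^esub> \<zeta> k) = k"
    using transversal_decomp_unique[OF _ _ assms] by metis+
qed

lemma polar_group_mult_closed:
  assumes "u \<in> carrier (polar_group d n A \<zeta> F W)" "v \<in> carrier (polar_group d n A \<zeta> F W)"
  shows "u \<otimes>\<^bsub>polar_group d n A \<zeta> F W\<^esub> v \<in> carrier (polar_group d n A \<zeta> F W)"
proof -
  obtain a p x b q y where "u = (a, p, x)" "a \<in> F" "x \<in> zvecs d n"
    and "v = (b, q, y)" "b \<in> F"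
    using assms by (auto simp: polar_group_def)
  moreover have "a \<otimes>\<^bsub>A\<^esub> b \<in> carrier A" using \<open>a \<in> F\<close> \<open>b \<in> F\<close> F_subset by auto
  ultimately show ?thesis using rep_decomp(1) d_gt_1 zvec_add_in_zvecs[of x d n y]
    by (simp add: polar_group_def zvec_add_def)
qed

lemma polar_mult_flat:
  assumes "a \<in> F" "b \<in> F" "p \<in> {0..<int d}" "q \<in> {0..<int d}"
  shows "rep_r A d \<zeta> F (a \<otimes>\<^bsub>A\<^esub> b)
      \<otimes>\<^bsub>A\<^esub> \<zeta> ((rep_u A d \<zeta> F (a \<otimes>\<^bsub>A\<^esub> b) + p + q + e) mod int d)
    = a \<otimes>\<^bsub>A\<^esub> \<zeta> p \<otimes>\<^bsub>A\<^esub> (b \<otimes>\<^bsub>A\<^esub> \<zeta> q) \<otimes>\<^bsub>A\<^esub> \<zeta> 1 [^]\<^bsub>A\<^esub> e"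
proof -
  define r k where "r = rep_r A d \<zeta> F (a \<otimes>\<^bsub>A\<^esub> b)" and "k = rep_u A d \<zeta> F (a \<otimes>\<^bsub>A\<^esub> b)"
  have ab: "a \<in> carrier A" "b \<in> carrier A" using assms(1,2) F_subset by auto
  then have rk: "r \<in> carrier A" "k \<in> {0..<int d}" "r \<otimes>\<^bsub>A\<^esub> \<zeta> k = a \<otimes>\<^bsub>A\<^esub> b"
    using rep_decomp[of "a \<otimes>\<^bsub>A\<^esub> b"] F_subset unfolding r_def k_def by auto
  have g: "\<zeta> 1 \<in> carrier A" using \<zeta>_in_carrier d_gt_1 by simp
  have "\<zeta> ((k + p + q + e) mod int d)
      = \<zeta> k \<otimes>\<^bsub>A\<^esub> \<zeta> p \<otimes>\<^bsub>A\<^esub> \<zeta> q \<otimes>\<^bsub>A\<^esub> \<zeta> 1 [^]\<^bsub>A\<^esub> e"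
    using rk(2) assms(3,4) g by (simp add: \<zeta>_mod_eq_pow \<zeta>_eq_pow A.int_pow_mult)
  then have "r \<otimes>\<^bsub>A\<^esub> \<zeta> ((k + p + q + e) mod int d)
      = (r \<otimes>\<^bsub>A\<^esub> \<zeta> k) \<otimes>\<^bsub>A\<^esub> \<zeta> p \<otimes>\<^bsub>A\<^esub> \<zeta> q \<otimes>\<^bsub>A\<^esub> \<zeta> 1 [^]\<^bsub>A\<^esub> e"
    using rk(1,2) assms(3,4) \<zeta>_in_carrier g by (simp add: A.m_assoc)
  also have "\<dots> = a \<otimes>\<^bsub>A\<^esub> \<zeta> p \<otimes>\<^bsub>A\<^esub> (b \<otimes>\<^bsub>A\<^esub> \<zeta> q) \<otimes>\<^bsub>A\<^esub> \<zeta> 1 [^]\<^bsub>A\<^esub> e"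
    using rk(3) ab assms(3,4) \<zeta>_in_carrier g by (simp add: A.m_ac)
  finally show ?thesis unfolding r_def k_def .
qed

lemma polar_group_iso_twisted_group:
  "(\<lambda>(a, p, x). (a \<otimes>\<^bsub>A\<^esub> \<zeta> p, x)) \<in> iso (polar_group d n A \<zeta> F W) (twisted_group d n A (\<zeta> 1) W)"
proof -
  let ?G = "polar_group d n A \<zeta> F W" and ?T = "twisted_group d n A (\<zeta> 1) W"
  let ?flat = "\<lambda>(a, p, x). (a \<otimes>\<^bsub>A\<^esub> \<zeta> p, x)"
  have "?flat \<in> hom ?G ?T"
  proof (rule homI)
    show "?flat u \<in> carrier ?T" if "u \<in> carrier ?G" for u
      using that F_subset \<zeta>_in_carrier by (auto simp: polar_group_def)
    show "?flat (u \<otimes>\<^bsub>?G\<^esub> v) = ?flat u \<otimes>\<^bsub>?T\<^esub> ?flat v" if "u \<in> carrier ?G" "v \<in> carrier ?G" for u v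
      using that by (auto simp: polar_group_def zvec_add_def polar_mult_flat)
  qed
  moreover have "bij_betw ?flat (carrier ?G) (carrier ?T)"
  proof (rule bij_betw_byWitness[where f' = "\<lambda>(\<alpha>, x). (rep_r A d \<zeta> F \<alpha>, rep_u A d \<zeta> F \<alpha>, x)"])
    show "\<forall>u \<in> carrier ?G. (\<lambda>(\<alpha>, x). (rep_r A d \<zeta> F \<alpha>, rep_u A d \<zeta> F \<alpha>, x)) (?flat u) = u"
      by (auto simp: polar_group_def rep_of_decomp)
    show "\<forall>w \<in> carrier ?T. ?flat ((\<lambda>(\<alpha>, x). (rep_r A d \<zeta> F \<alpha>, rep_u A d \<zeta> F \<alpha>, x)) w) = w"
      by (auto simp: rep_decomp)
    show "?flat ` carrier ?G \<subseteq> carrier ?T"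
      using F_subset \<zeta>_in_carrier by (auto simp: polar_group_def)
    show "(\<lambda>(\<alpha>, x). (rep_r A d \<zeta> F \<alpha>, rep_u A d \<zeta> F \<alpha>, x)) ` carrier ?T \<subseteq> carrier ?G"
      using rep_decomp(1,2) by (auto simp: polar_group_def)
  qed
  ultimately show ?thesis unfolding iso_def by blast
qed

end

theorem proposition23:
  fixes d n :: nat and A :: "('a, 'b) monoid_scheme" and \<zeta> :: "int \<Rightarrow> 'a"
    and F :: "'a set" and W1 W2 :: "nat \<Rightarrow> nat \<Rightarrow> int"
  assumes "prime d"
    and "comm_group A"
    and "\<zeta> \<in> hom (integer_mod_group d) A" and "inj_on \<zeta> {0..<int d}"
    and "\<forall>a \<in> \<zeta> ` {0..<int d}. \<exists>b \<in> carrier A. b \<otimes>\<^bsub>A\<^esub> b = a"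
    and "is_transversal A d \<zeta> F"
    and "W1 \<in> zmats d n" and "W2 \<in> zmats d n"
    and "full_rank_mod d n (omega_mat d W1)" and "full_rank_mod d n (omega_mat d W2)"
  shows "polar_group d n A \<zeta> F W1 \<cong> polar_group d n A \<zeta> F W2"
proof -
  have d: "d > 1" using \<open>prime d\<close> prime_gt_1_nat by blast
  interpret polar_setting d A \<zeta> F
    using d assms(2,3,4,6) by (simp add: polar_setting_def)
  have g: "\<zeta> 1 \<in> carrier A" using \<zeta>_in_carrier d by simp
  have "\<zeta> 1 \<in> \<zeta> ` {0..<int d}" using d by simp
  then obtain b where "b \<in> carrier A" "b \<otimes>\<^bsub>A\<^esub> b = \<zeta> 1" using assms(5) by blast
  then obtain t where t: "t \<in> carrier A" "t [^]\<^bsub>A\<^esub> (2::int) = \<zeta> 1"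
    "t [^]\<^bsub>A\<^esub> (2 * int d) = \<one>\<^bsub>A\<^esub>" "t [^]\<^bsub>A\<^esub> (int d * int d) = \<one>\<^bsub>A\<^esub>"
    using A.square_root_of_torsion \<zeta>_1_pow_d by metis
  let ?T = "twisted_group d n A (\<zeta> 1)"
  have std: "?T W_std \<cong> ?T W" if "full_rank_mod d n (omega_mat d W)" for W
    using A.twisted_group_std_iso[OF t(1,3,4) d] symplectic_basis_exists[OF \<open>prime d\<close> that] t(2)
    by metis
  have T_closed: "u \<otimes>\<^bsub>?T W\<^esub> v \<in> carrier (?T W)" if "u \<in> carrier (?T W)" "v \<in> carrier (?T W)" for u v W
    by (rule twisted_group_mult_closed[OF A.is_group g that])
  have "polar_group d n A \<zeta> F W1 \<cong> ?T W1"
    by (rule is_isoI[OF polar_group_iso_twisted_group])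
  also have "\<dots> \<cong> ?T W_std"
    by (rule iso_sym_mult_closed[OF std[OF assms(9)] T_closed])
  also have "\<dots> \<cong> ?T W2"
    by (rule std[OF assms(10)])
  also have "\<dots> \<cong> polar_group d n A \<zeta> F W2"
    by (rule iso_sym_mult_closed[OF is_isoI[OF polar_group_iso_twisted_group] polar_group_mult_closed])
  finally show ?thesis .
qed

end
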